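(* For every even integer $T\ge 6$ and every $\sigma\in\mathfrak S_3$, the vector $\sigma c$ with $c=[\tfrac32T-1,\ \tfrac T2,\ -\tfrac T2+1,\ -\tfrac T2+1,\ -\tfrac T2+1,\ \tfrac T2]$ defines a facet of $P^T$.
   Context: For an integer $T\ge 2$, let $\Omega_T$ be the set of words $w=s_1s_2\cdots s_T$ over $\{1,2,3\}$ with $s_l\neq s_{l+1}$ for $l=1,\dots,T-1$. For $w\in\Omega_T$ and an ordered pair $ij$, $i\neq j$, let $x_{ij}(w)$ be the number of indices $1\le l\le T-1$ with $s_ls_{l+1}=ij$. Vectors of $\mathbb R^6$ are indexed in the order $[x_{12},x_{13},x_{21},x_{23},x_{31},x_{32}]$. Let $a_w=[x_{12}(w),\dots,x_{32}(w)]$ and $P^T=\mathrm{conv}\{a_w:w\in\Omega_T\}$. $\mathfrak S_3$ acts on $\mathbb R^6$ by $(\sigma c)_{ij}=c_{\sigma(i)\sigma(j)}$. A vector $c$ defines a facet of $P^T$ if $c\cdot a_w\ge0$ for all $w\in\Omega_T$ and $\{x\in P^T: c\cdot x=0\}$ is a facet of $P^T$. *)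

theory Defs
  imports "HOL-Analysis.Analysis" "HOL-Combinatorics.Permutations"
begin

definition Omega :: "nat \<Rightarrow> nat list set" where
  "Omega T = {w. length w = T \<and> set w \<subseteq> {1,2,3} \<and>
                 (\<forall>l. l + 1 < T \<longrightarrow> w ! l \<noteq> w ! (l + 1))}"

definition xcount :: "nat \<Rightarrow> nat \<Rightarrow> nat list \<Rightarrow> nat" where
  "xcount i j w = card {l. l + 1 < length w \<and> w ! l = i \<and> w ! (l + 1) = j}"

definition coord6 :: "(nat \<Rightarrow> nat \<Rightarrow> real) \<Rightarrow> real^6" where
  "coord6 f = vector [f 1 2, f 1 3, f 2 1, f 2 3, f 3 1, f 3 2]"

definition avec :: "nat list \<Rightarrow> real^6" where
  "avec w = coord6 (\<lambda>i j. real (xcount i j w))"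

definition PT :: "nat \<Rightarrow> (real^6) set" where
  "PT T = convex hull (avec ` Omega T)"

definition sigma_act :: "(nat \<Rightarrow> nat) \<Rightarrow> (nat \<Rightarrow> nat \<Rightarrow> real) \<Rightarrow> real^6" where
  "sigma_act \<sigma> c = coord6 (\<lambda>i j. c (\<sigma> i) (\<sigma> j))"

definition defines_facet :: "nat \<Rightarrow> real^6 \<Rightarrow> bool" where
  "defines_facet T c \<longleftrightarrow> (\<forall>w\<in>Omega T. c \<bullet> avec w \<ge> 0) \<and>
      {x \<in> PT T. c \<bullet> x = 0} facet_of PT T"

definition cfun :: "nat \<Rightarrow> nat \<Rightarrow> nat \<Rightarrow> real" where
  "cfun T i j =
     (if (i, j) = (1, 2) then 3/2 * real T - 1
      else if (i, j) = (1, 3) then real T / 2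
      else if (i, j) = (2, 1) then - real T / 2 + 1
      else if (i, j) = (2, 3) then - real T / 2 + 1
      else if (i, j) = (3, 1) then - real T / 2 + 1
      else if (i, j) = (3, 2) then real T / 2
      else 0)"

end

theory Submission
  imports Defs
begin

text \<open>Write T = 2m. The coordinates of every point a_w sum to T - 1, and on that hyperplane
  c . a_w = (T - 1) (2 x_12 + x_13 + x_32 + 1 - m). A potential on the letters shows
  2 (2 x_12 + x_13 + x_32) + 3 \<ge> T, so c is valid. Five explicit words attain equality with
  affinely independent points, while (12)^m does not attain it, so the face cut out by c has
  dimension one less than P^T. Permuting the letters of the words by \<sigma> permutes Omega T and
  gives (\<sigma> c) . a_w = c . a_(\<sigma> w), which reduces the general case to c itself.\<close>

lemma aff_dim_insert_off_hyperplane: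
  fixes S :: "'a::euclidean_space set"
  assumes "\<And>x. x \<in> S \<Longrightarrow> g \<bullet> x = b" and "g \<bullet> q \<noteq> b"
  shows "aff_dim (insert q S) = aff_dim S + 1"
proof -
  have "affine hull S \<subseteq> {x. g \<bullet> x = b}"
    using assms(1) by (intro hull_minimal) (auto simp: affine_hyperplane)
  then show ?thesis
    using assms(2) by (auto simp: aff_dim_insert)
qed

lemma facet_of_convex_hull_supporting_hyperplane:
  fixes S Z :: "'a::euclidean_space set"
  assumes nonneg: "\<And>x. x \<in> S \<Longrightarrow> c \<bullet> x \<ge> 0"
    and pos: "q \<in> S" "c \<bullet> q > 0"
    and tight: "Z \<subseteq> S" "\<And>x. x \<in> Z \<Longrightarrow> c \<bullet> x = 0" "Z \<noteq> {}"
    and dim: "aff_dim S \<le> aff_dim Z + 1"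
  shows "{x \<in> convex hull S. c \<bullet> x = 0} facet_of convex hull S"
proof -
  define F where "F = {x \<in> convex hull S. c \<bullet> x = 0}"
  have "convex hull S \<subseteq> {x. c \<bullet> x \<ge> 0}"
    using nonneg by (intro hull_minimal) (auto simp: convex_halfspace_ge)
  then have face: "F face_of convex hull S"
    using face_of_Int_supporting_hyperplane_ge[where S="convex hull S" and a=c and b=0]
    unfolding F_def by (auto simp: Int_def)
  have "Z \<subseteq> F"
    using tight(1,2) hull_subset[of S convex] unfolding F_def by auto
  then have "aff_dim Z \<le> aff_dim F" "F \<noteq> {}"
    using tight(3) aff_dim_subset by auto
  moreover have "q \<notin> F" "q \<in> convex hull S"
    using pos hull_subset[of S convex] unfolding F_def by auto
  then have "aff_dim F < aff_dim S"
    using face_of_aff_dim_lt[OF convex_convex_hull face] by (auto simp: aff_dim_convex_hull)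
  ultimately show ?thesis
    using face dim unfolding facet_of_def F_def by (simp add: aff_dim_convex_hull)
qed

lemma xcount_Nil [simp]: "xcount i j [] = 0"
  by (simp add: xcount_def)

lemma xcount_Cons:
  "xcount i j (a # v) = (if v \<noteq> [] \<and> a = i \<and> hd v = j then 1 else 0) + xcount i j v"
proof -
  let ?S = "\<lambda>v. {l. l + 1 < length v \<and> v ! l = i \<and> v ! (l + 1) = j}"
  have split: "?S (a # v) = (if v \<noteq> [] \<and> a = i \<and> hd v = j then {0} else {}) \<union> Suc ` ?S v"
  proof (rule set_eqI)
    show "l \<in> ?S (a # v) \<longleftrightarrow>
        l \<in> (if v \<noteq> [] \<and> a = i \<and> hd v = j then {0} else {}) \<union> Suc ` ?S v" for l
      by (cases l) (auto simp: hd_conv_nth)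
  qed
  have "finite (?S v)"
    by (rule finite_subset[of _ "{..<length v}"]) auto
  then show ?thesis
    unfolding xcount_def split by (auto simp: card_image)
qed

lemma xcount_singleton [simp]: "xcount i j [a] = 0"
  by (simp add: xcount_Cons)

lemma xcount_Cons_Cons [simp]:
  "xcount i j (a # b # v) = (if a = i \<and> b = j then 1 else 0) + xcount i j (b # v)"
  by (subst xcount_Cons) simp

lemma xcount_map:
  assumes "inj \<sigma>"
  shows "xcount (\<sigma> i) (\<sigma> j) (map \<sigma> w) = xcount i j w"
  unfolding xcount_def using assms by (intro arg_cong[where f=card] Collect_cong) (auto simp: inj_eq)

fun valid_word :: "nat list \<Rightarrow> bool" where
  "valid_word [] = True"
| "valid_word [a] = (a \<in> {1,2,3})"
| "valid_word (a # b # w) = (a \<in> {1,2,3} \<and> a \<noteq> b \<and> valid_word (b # w))"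

lemma valid_word_iff:
  "valid_word w \<longleftrightarrow> set w \<subseteq> {1,2,3} \<and> (\<forall>l. l + 1 < length w \<longrightarrow> w ! l \<noteq> w ! (l + 1))"
proof (induction w rule: valid_word.induct)
  case (3 a b w)
  have all_nat: "(\<forall>l. P l) \<longleftrightarrow> P 0 \<and> (\<forall>l. P (Suc l))" for P :: "nat \<Rightarrow> bool"
    by (metis not0_implies_Suc)
  show ?case
    by (subst all_nat) (use "3" in auto)
qed auto

lemma Omega_iff: "w \<in> Omega T \<longleftrightarrow> length w = T \<and> valid_word w"
  unfolding Omega_def valid_word_iff by auto

lemma valid_word_map:
  assumes "\<sigma> permutes {1,2,3}" and "valid_word w"
  shows "valid_word (map \<sigma> w)"
  using assms(2)
proof (induction w rule: valid_word.induct)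
  case (2 a)
  then show ?case using permutes_in_image[OF assms(1)] by simp
next
  case (3 a b w)
  then show ?case
    using permutes_in_image[OF assms(1)] permutes_inj[OF assms(1)] by (simp add: inj_eq)
qed simp

lemma map_permutes_Omega:
  assumes "\<sigma> permutes {1,2,3}" and "w \<in> Omega T"
  shows "map \<sigma> w \<in> Omega T"
  using assms valid_word_map by (auto simp: Omega_iff)

lemma xcount_total:
  assumes "valid_word w" and "w \<noteq> []"
  shows "xcount 1 2 w + xcount 1 3 w + xcount 2 1 w + xcount 2 3 w + xcount 3 1 w + xcount 3 2 w
    = length w - 1"
  using assms
proof (induction w rule: valid_word.induct)
  case (3 a b w)
  then show ?case by (cases "b # w" rule: valid_word.cases) auto
qed auto

definition potential :: "nat \<Rightarrow> nat" where
  "potential a = (if a = 2 then 2 else if a = 3 then 1 else 0)"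

text \<open>Each step \<open>ab\<close> of a word satisfies
  \<open>2 (2 [ab = 12] + [ab = 13] + [ab = 32]) + potential a - potential b \<ge> 1\<close>;
  summing over the steps telescopes.\<close>
lemma potential_bound:
  assumes "valid_word w" and "w \<noteq> []"
  shows "length w + potential (last w)
    \<le> 2 * (2 * xcount 1 2 w + xcount 1 3 w + xcount 3 2 w) + potential (hd w) + 1"
  using assms
proof (induction w rule: valid_word.induct)
  case (3 a b w)
  then have "a \<in> {1,2,3}" "b \<in> {1,2,3}" "a \<noteq> b"
    by (auto elim: valid_word.elims)
  then show ?case
    using "3" by (auto simp: potential_def)
qed auto

corollary length_le_weighted_xcount:
  assumes "valid_word w"
  shows "length w \<le> 2 * (2 * xcount 1 2 w + xcount 1 3 w + xcount 3 2 w) + 3"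
proof (cases "w = []")
  case False
  have "potential (hd w) \<le> 2"
    by (simp add: potential_def)
  then show ?thesis
    using potential_bound[OF assms False] by linarith
qed simp

fun alt :: "nat \<Rightarrow> nat \<Rightarrow> nat \<Rightarrow> nat list" where
  "alt a b 0 = []"
| "alt a b (Suc n) = a # alt b a n"

lemma length_alt [simp]: "length (alt a b n) = n"
  by (induction n arbitrary: a b) auto

lemma hd_alt [simp]: "0 < n \<Longrightarrow> hd (alt a b n) = a"
  by (cases n) auto

lemma alt_eq_Nil_iff [simp]: "alt a b n = [] \<longleftrightarrow> n = 0"
  by (cases n) auto

lemma valid_word_alt:
  assumes "a \<in> {1,2,3}" "b \<in> {1,2,3}" "a \<noteq> b"
  shows "valid_word (alt a b n)"
  using assms
proof (induction n arbitrary: a b)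
  case (Suc n)
  then show ?case by (cases n) auto
qed simp

lemma valid_word_Cons_alt:
  assumes "c \<in> {1,2,3}" "c \<noteq> a" "a \<in> {1,2,3}" "b \<in> {1,2,3}" "a \<noteq> b"
  shows "valid_word (c # alt a b n)"
  using valid_word_alt[OF assms(3-5), of n] assms(1,2) by (cases n) auto

lemma xcount_alt:
  assumes "a \<noteq> b"
  shows "xcount i j (alt a b n) =
    (if i = a \<and> j = b then n div 2 else if i = b \<and> j = a then (n - 1) div 2 else 0)"
  using assms
proof (induction n arbitrary: a b)
  case (Suc n)
  then show ?case by (cases n) (auto simp: xcount_Cons)
qed simp

definition offdiag3 :: "(nat \<times> nat) set" where
  "offdiag3 = {(i, j). i \<in> {1,2,3} \<and> j \<in> {1,2,3} \<and> i \<noteq> j}"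

lemma offdiag3_eq: "offdiag3 = {(1,2), (1,3), (2,1), (2,3), (3,1), (3,2)}"
  by (auto simp: offdiag3_def)

lemma UNIV_6: "(UNIV :: 6 set) = {1, 2, 3, 4, 5, 6}"
proof -
  have "x \<in> {1, 2, 3, 4, 5, 6}" for x :: 6
  proof (induct x)
    case (of_int z)
    then have "z \<in> {0, 1, 2, 3, 4, 5}" by auto
    then show ?case by auto
  qed
  then show ?thesis by auto
qed

lemma sum_UNIV_6: "sum f (UNIV :: 6 set) = f 1 + f 2 + f 3 + f 4 + f 5 + f 6"
  unfolding UNIV_6 by (simp add: ac_simps)

lemma sum_offdiag3:
  "(\<Sum>(i, j)\<in>offdiag3. h i j) = h 1 2 + h 1 3 + h 2 1 + h 2 3 + h 3 1 + h 3 2"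
  unfolding offdiag3_eq by (simp add: ac_simps)

lemma vector6_nth:
  "vector [a, b, c, d, e, f] $ (1 :: 6) = a"
  "vector [a, b, c, d, e, f] $ (2 :: 6) = b"
  "vector [a, b, c, d, e, f] $ (3 :: 6) = c"
  "vector [a, b, c, d, e, f] $ (4 :: 6) = d"
  "vector [a, b, c, d, e, f] $ (5 :: 6) = e"
  "vector [a, b, c, d, e, f] $ (6 :: 6) = f"
  unfolding vector_def by simp_all

lemma inner_coord6: "coord6 f \<bullet> coord6 g = (\<Sum>(i, j)\<in>offdiag3. f i j * g i j)"
  unfolding sum_offdiag3 coord6_def inner_vec_def sum_UNIV_6 by (simp add: vector6_nth)

lemma inner_coord6_avec: "coord6 f \<bullet> avec w = (\<Sum>(i, j)\<in>offdiag3. f i j * real (xcount i j w))"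
  unfolding avec_def inner_coord6 ..

lemma sigma_act_inner_avec:
  assumes "\<sigma> permutes {1,2,3}"
  shows "sigma_act \<sigma> c \<bullet> avec w = coord6 c \<bullet> avec (map \<sigma> w)"
proof -
  have inj: "inj \<sigma>"
    using permutes_inj[OF assms] .
  have "(\<Sum>(i, j)\<in>offdiag3. c (\<sigma> i) (\<sigma> j) * real (xcount (\<sigma> i) (\<sigma> j) (map \<sigma> w)))
      = (\<Sum>(k, l)\<in>offdiag3. c k l * real (xcount k l (map \<sigma> w)))"
    using permutes_in_image[OF assms] permutes_in_image[OF permutes_inv[OF assms]]
      permutes_inverses[OF assms] inj permutes_inj[OF permutes_inv[OF assms]]
    by (intro sum.reindex_bij_witness[where i="\<lambda>(k, l). (inv \<sigma> k, inv \<sigma> l)"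
        and j="\<lambda>(i, j). (\<sigma> i, \<sigma> j)"]) (auto simp: offdiag3_def inj_eq)
  then show ?thesis
    unfolding sigma_act_def inner_coord6_avec xcount_map[OF inj] by simp
qed

lemma sigma_act_inner_avec_inv:
  assumes "\<sigma> permutes {1,2,3}"
  shows "sigma_act \<sigma> c \<bullet> avec (map (inv \<sigma>) w) = coord6 c \<bullet> avec w"
  using permutes_inverses(1)[OF assms]
  by (simp add: sigma_act_inner_avec[OF assms] comp_def)

lemma inner_indicator_avec:
  assumes "(k, l) \<in> offdiag3"
  shows "coord6 (\<lambda>i j. of_bool ((i, j) = (k, l))) \<bullet> avec w = real (xcount k l w)"
  using assms unfolding inner_coord6_avec sum_offdiag3 offdiag3_eq by auto

lemma aff_dim_avec_Omega_le:
  assumes "T \<ge> 1"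
  shows "aff_dim (avec ` Omega T) \<le> 5"
proof -
  let ?one = "coord6 (\<lambda>i j. 1)"
  have "avec ` Omega T \<subseteq> {x. ?one \<bullet> x = real T - 1}"
  proof clarify
    fix w assume "w \<in> Omega T"
    then have "valid_word w" "length w = T" "w \<noteq> []"
      using assms by (auto simp: Omega_iff)
    then show "?one \<bullet> avec w = real T - 1"
      using xcount_total[of w] assms unfolding inner_coord6_avec sum_offdiag3
      by (simp add: of_nat_diff flip: of_nat_add)
  qed
  moreover have "?one $ 1 = 1"
    by (simp add: coord6_def vector6_nth)
  then have "aff_dim {x. ?one \<bullet> x = real T - 1} = 5"
    by (subst aff_dim_hyperplane) auto
  ultimately show ?thesis
    by (metis aff_dim_subset)
qed

lemma inner_cfun_avec_nonneg:
  assumes "even T" and "T \<ge> 2" and "w \<in> Omega T"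
  shows "coord6 (cfun T) \<bullet> avec w \<ge> 0"
proof -
  obtain m where T: "T = 2 * m"
    using assms(1) by blast
  have valid: "valid_word w" and len: "length w = T"
    using assms(3) by (auto simp: Omega_iff)
  define x where "x i j = real (xcount i j w)" for i j
  define Q where "Q = 2 * x 1 2 + x 1 3 + x 3 2"
  have "2 * m \<le> 2 * (2 * xcount 1 2 w + xcount 1 3 w + xcount 3 2 w) + 3"
    using length_le_weighted_xcount[OF valid] len T by simp
  then have "m \<le> 2 * xcount 1 2 w + xcount 1 3 w + xcount 3 2 w + 1"
    by presburger
  then have Q_ge: "Q + 1 \<ge> real m"
    unfolding Q_def x_def by linarith
  have "xcount 1 2 w + xcount 1 3 w + xcount 2 1 w + xcount 2 3 w + xcount 3 1 w + xcount 3 2 w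
      = 2 * m - 1"
    using xcount_total[OF valid] len T assms(2) by force
  then have total: "x 1 2 + x 1 3 + x 2 1 + x 2 3 + x 3 1 + x 3 2 = 2 * real m - 1"
    unfolding x_def using T assms(2) by (simp add: of_nat_diff flip: of_nat_add)
  have "coord6 (cfun T) \<bullet> avec w
      = (3 * real m - 1) * x 1 2 + real m * x 1 3 + (1 - real m) * (x 2 1 + x 2 3 + x 3 1) + real m * x 3 2"
    unfolding inner_coord6_avec sum_offdiag3 x_def by (simp add: cfun_def T algebra_simps)
  also have "\<dots> = (2 * real m - 1) * (Q + 1 - real m)
      + (1 - real m) * (x 1 2 + x 1 3 + x 2 1 + x 2 3 + x 3 1 + x 3 2 - (2 * real m - 1))"
    unfolding Q_def by (simp add: algebra_simps)
  also have "\<dots> = (2 * real m - 1) * (Q + 1 - real m)"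
    using total by simp
  also have "\<dots> \<ge> 0"
    using Q_ge assms(2) T by simp
  finally show ?thesis .
qed

lemma sigma_act_cfun_inner_avec_nonneg:
  assumes "even T" and "T \<ge> 2" and "\<sigma> permutes {1,2,3}" and "w \<in> Omega T"
  shows "sigma_act \<sigma> (cfun T) \<bullet> avec w \<ge> 0"
  unfolding sigma_act_inner_avec[OF assms(3)]
  using inner_cfun_avec_nonneg[OF assms(1,2) map_permutes_Omega[OF assms(3,4)]] .

definition tight_words :: "nat \<Rightarrow> nat list set" where
  "tight_words m = {2 # 3 # 1 # 2 # alt 3 1 (2 * m - 4), alt 2 3 (2 * m),
     2 # alt 3 1 (2 * m - 1), 2 # alt 1 3 (2 * m - 1), alt 3 1 (2 * m)}"

lemma tight_words_Omega:
  assumes "m \<ge> 3"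
  shows "tight_words m \<subseteq> Omega (2 * m)"
  using assms by (auto simp: tight_words_def Omega_iff intro!: valid_word_alt valid_word_Cons_alt)

lemma inner_cfun_tight_words:
  assumes "m \<ge> 3" and "w \<in> tight_words m"
  shows "coord6 (cfun (2 * m)) \<bullet> avec w = 0"
proof -
  have "real (m - 1) = real m - 1" "real (m - 3) = real m - 3"
    "(2 * m - 1) div 2 = m - 1" "(2 * m - 1 - 1) div 2 = m - 1"
    "(2 * m - 4) div 2 = m - 2" "(2 * m - 4 - 1) div 2 = m - 3"
    using assms(1) by (simp_all add: of_nat_diff)
  then show ?thesis
    using assms
    by (auto simp: tight_words_def inner_coord6_avec sum_offdiag3 cfun_def xcount_alt xcount_Cons
        algebra_simps)
qed

lemma aff_dim_tight_points:
  assumes "\<sigma> permutes {1,2,3}" and "m \<ge> 3"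
  shows "aff_dim ((\<lambda>w. avec (map (inv \<sigma>) w)) ` tight_words m) = 4"
proof -
  let ?p = "\<lambda>w. avec (map (inv \<sigma>) w)"
  have add_point: "aff_dim (?p ` insert u W) = aff_dim (?p ` W) + 1"
    if "(k, l) \<in> offdiag3" "\<And>w. w \<in> W \<Longrightarrow> xcount k l w = 0" "xcount k l u \<noteq> 0"
    for k l u W
  proof -
    let ?g = "sigma_act \<sigma> (\<lambda>i j. of_bool ((i, j) = (k, l)))"
    have g_p: "?g \<bullet> ?p w = real (xcount k l w)" for w
      unfolding sigma_act_inner_avec_inv[OF assms(1)] using inner_indicator_avec[OF that(1)] .
    show ?thesis
      unfolding image_insert
      by (rule aff_dim_insert_off_hyperplane[where g="?g" and b=0]) (use that g_p in auto)
  qed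
  txt \<open>Adding the tight words one at a time, each is the first to contain the step
    21, 23, 32 and 12 respectively.\<close>
  define w0 where "w0 = alt 3 1 (2 * m)"
  define w1 where "w1 = 2 # alt 1 3 (2 * m - 1)"
  define w2 where "w2 = 2 # alt 3 1 (2 * m - 1)"
  define w3 where "w3 = alt 2 3 (2 * m)"
  define w4 where "w4 = 2 # 3 # 1 # 2 # alt 3 1 (2 * m - 4)"
  have counts:
    "xcount 2 1 w0 = 0" "xcount 2 1 w1 = 1"
    "xcount 2 3 w0 = 0" "xcount 2 3 w1 = 0" "xcount 2 3 w2 = 1"
    "xcount 3 2 w0 = 0" "xcount 3 2 w1 = 0" "xcount 3 2 w2 = 0" "xcount 3 2 w3 = m - 1"
    "xcount 1 2 w0 = 0" "xcount 1 2 w1 = 0" "xcount 1 2 w2 = 0" "xcount 1 2 w3 = 0" "xcount 1 2 w4 = 1"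
    unfolding w0_def w1_def w2_def w3_def w4_def using assms(2)
    by (simp_all add: xcount_alt xcount_Cons)
  have "aff_dim (?p ` {w1, w0}) = 1"
    by (subst add_point[of 2 1]) (use counts in \<open>auto simp: offdiag3_def\<close>)
  moreover have "aff_dim (?p ` {w2, w1, w0}) = aff_dim (?p ` {w1, w0}) + 1"
    by (rule add_point[of 2 3]) (use counts in \<open>auto simp: offdiag3_def\<close>)
  moreover have "aff_dim (?p ` {w3, w2, w1, w0}) = aff_dim (?p ` {w2, w1, w0}) + 1"
    by (rule add_point[of 3 2]) (use counts assms(2) in \<open>auto simp: offdiag3_def\<close>)
  moreover have "aff_dim (?p ` {w4, w3, w2, w1, w0}) = aff_dim (?p ` {w3, w2, w1, w0}) + 1"
    by (rule add_point[of 1 2]) (use counts in \<open>auto simp: offdiag3_def\<close>)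
  moreover have "tight_words m = {w4, w3, w2, w1, w0}"
    unfolding tight_words_def w0_def w1_def w2_def w3_def w4_def ..
  ultimately show ?thesis
    by simp
qed

lemma inner_cfun_alt_pos:
  assumes "m \<ge> 1"
  shows "coord6 (cfun (2 * m)) \<bullet> avec (alt 1 2 (2 * m)) > 0"
proof -
  have "(2 * m - 1) div 2 = m - 1"
    by auto
  then have "coord6 (cfun (2 * m)) \<bullet> avec (alt 1 2 (2 * m))
      = (3 * real m - 1) * real m + (1 - real m) * real (m - 1)"
    by (simp add: inner_coord6_avec sum_offdiag3 cfun_def xcount_alt)
  also have "\<dots> = 2 * real m * real m + real m - 1"
    using assms by (simp add: of_nat_diff algebra_simps)
  also have "\<dots> > 0"
  proof -
    have "real m \<ge> 1"
      using assms by simp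
    then have "real m * real m \<ge> 1"
      using mult_mono[of 1 "real m" 1 "real m"] by simp
    then show ?thesis
      using \<open>real m \<ge> 1\<close> by linarith
  qed
  finally show ?thesis .
qed

theorem proposition10:
  fixes T :: nat and \<sigma> :: "nat \<Rightarrow> nat"
  assumes "even T" and "T \<ge> 6" and "\<sigma> permutes {1, 2, 3}"
  shows "defines_facet T (sigma_act \<sigma> (cfun T))"
proof -
  obtain m where T: "T = 2 * m" and m: "m \<ge> 3"
    using assms(1,2) by (auto elim!: evenE)
  let ?c = "sigma_act \<sigma> (cfun T)"
  let ?p = "\<lambda>w. avec (map (inv \<sigma>) w)"
  have Omega_inv: "map (inv \<sigma>) w \<in> Omega T" if "w \<in> Omega T" for w
    using map_permutes_Omega[OF permutes_inv[OF assms(3)] that] .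
  have c_p: "?c \<bullet> ?p w = coord6 (cfun T) \<bullet> avec w" for w
    using sigma_act_inner_avec_inv[OF assms(3)] .
  have nonneg: "?c \<bullet> avec w \<ge> 0" if "w \<in> Omega T" for w
    using sigma_act_cfun_inner_avec_nonneg[OF assms(1) _ assms(3) that] assms(2) by simp
  have "{x \<in> convex hull (avec ` Omega T). ?c \<bullet> x = 0} facet_of convex hull (avec ` Omega T)"
  proof (rule facet_of_convex_hull_supporting_hyperplane
      [where q="?p (alt 1 2 T)" and Z="?p ` tight_words m"])
    show "?p (alt 1 2 T) \<in> avec ` Omega T"
      using Omega_inv by (simp add: Omega_iff valid_word_alt)
    show "?c \<bullet> ?p (alt 1 2 T) > 0"
      using inner_cfun_alt_pos[of m] m c_p[of "alt 1 2 T"] T by simp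
    show "?p ` tight_words m \<subseteq> avec ` Omega T"
      using tight_words_Omega[OF m] Omega_inv T by blast
    show "?c \<bullet> x = 0" if "x \<in> ?p ` tight_words m" for x
      using that inner_cfun_tight_words[OF m] c_p T by auto
    show "?p ` tight_words m \<noteq> {}"
      by (simp add: tight_words_def)
    show "aff_dim (avec ` Omega T) \<le> aff_dim (?p ` tight_words m) + 1"
      using aff_dim_avec_Omega_le[of T] aff_dim_tight_points[OF assms(3) m] T m by simp
  qed (use nonneg in auto)
  then show ?thesis
    unfolding defines_facet_def PT_def using nonneg by blast
qed

end
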